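(* Let $M>0$, $|Q|\le M$, and consider the exterior of the Reissner–Nordström spacetime in double null coordinates $(u,v,\theta,\phi)$ as described in the context. Let $u_0,v_0\in\mathbb{R}$ and let $\xi,\Xi$ be smooth $S^2_{u,v}$-tensor fields (of the same type) on $\{u\ge u_0,\ v\ge v_0\}$ satisfying $$\Omega\nabla_4\xi=\Omega^2\,\Xi ,$$ and assume that, if $|Q|<M$, $\xi(u,v_0,\cdot)=\mathcal{O}(\Omega(u,v_0))$ as $u\to\infty$. Then for every $u\ge u_0$ (fixed outgoing cone $C_u=\{u\}\times\{v\ge v_0\}\times S^2$), $$\limsup_{v\to\infty}\|\xi\|^2(u,v)\le\frac{1}{1-\frac{r_+}{r(u,v_0)}}\|\xi\|^2(u,v_0)+\frac{1}{r_+}\int_{v_0}^{\infty}\int_{S^2}\big|\Omega r\,\Xi\big|^2\,dv\,\varepsilon_{S^2},$$ and $$\int_{v_0}^{\infty}\int_{S^2}\frac{\Omega^2}{r^2}|\xi|^2\,dv\,\varepsilon_{S^2}\le C\Big(\|\xi\|^2(u,v_0)+\frac{1}{r_+}\int_{v_0}^{\infty}\int_{S^2}\big|\Omega r\,\Xi\big|^2\,dv\,\varepsilon_{S^2}\Big),$$ for a constant $C$ depending only on $M,Q$.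
   Context: Reissner–Nordström exterior: $r_+=M+\sqrt{M^2-Q^2}$, $\Omega^2(r)=1-\frac{2M}{r}+\frac{Q^2}{r^2}$, and $r=r(u,v)>r_+$ is defined by $r_\star(r)=v-u$ where $dr_\star/dr=\Omega^{-2}$; the metric is $g=-2\Omega^2(du\otimes dv+dv\otimes du)+r^2\gamma$ with $\gamma$ the unit round metric, so $\partial_vr=\Omega^2$, $\partial_ur=-\Omega^2$; the event horizon corresponds to $u=\infty$. $S^2_{u,v}$ denotes the sphere of constant $(u,v)$ with metric $r^2\gamma$; an $S^2_{u,v}$-tensor field is a covariant tensor field tangent to these spheres. $e_4=\Omega^{-1}\partial_v$, and $\nabla_4$ is the projection onto $S^2_{u,v}$ of the spacetime covariant derivative along $e_4$. Pointwise norms $|\cdot|$ are with respect to $r^2\gamma$, $\varepsilon_{S^2}$ is the volume form of the unit sphere, and $\|\xi\|^2(u,v)=\int_{S^2}|\xi|^2(u,v,\theta,\phi)\,\varepsilon_{S^2}$. *)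

theory Defs
  imports "HOL-Analysis.Analysis"
begin

definition rplus :: "real \<Rightarrow> real \<Rightarrow> real" where
  "rplus M Q = M + sqrt (M\<^sup>2 - Q\<^sup>2)"

definition Om2 :: "real \<Rightarrow> real \<Rightarrow> real \<Rightarrow> real" where
  "Om2 M Q \<rho> = 1 - 2 * M / \<rho> + Q\<^sup>2 / \<rho>\<^sup>2"

text \<open>A tortoise coordinate: any function with d r_star / d r = Omega^(-2) on (r_+, infinity).
  (It is determined up to an additive constant; the theorem quantifies over all choices.)\<close>
definition is_tortoise :: "real \<Rightarrow> real \<Rightarrow> (real \<Rightarrow> real) \<Rightarrow> bool" where
  "is_tortoise M Q rs \<longleftrightarrow>
     (\<forall>\<rho>>rplus M Q. (rs has_real_derivative (1 / Om2 M Q \<rho>)) (at \<rho>))"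

definition rad :: "real \<Rightarrow> real \<Rightarrow> (real \<Rightarrow> real) \<Rightarrow> real \<Rightarrow> real \<Rightarrow> real" where
  "rad M Q rs u v = (THE \<rho>. \<rho> > rplus M Q \<and> rs \<rho> = v - u)"

definition Om2uv :: "real \<Rightarrow> real \<Rightarrow> (real \<Rightarrow> real) \<Rightarrow> real \<Rightarrow> real \<Rightarrow> real" where
  "Om2uv M Q rs u v = Om2 M Q (rad M Q rs u v)"

text \<open>A covariant k-tensor tangent to the sphere is represented through the embedding of the unit
  sphere in R^3: a point of S^2 is a unit vector omega, and a k-tensor at omega is given by its
  components with respect to the Cartesian basis of R^3 (a function on index lists of length k),
  required to be tangential (contraction of any slot with the normal omega vanishes).
  Components are taken w.r.t. the unit round metric gamma; the physical metric is r^2 gamma.\<close>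

type_synonym tens = "3 list \<Rightarrow> real"

definition idx :: "nat \<Rightarrow> 3 list set" where
  "idx k = {is. length is = k}"

definition tangential :: "nat \<Rightarrow> real^3 \<Rightarrow> tens \<Rightarrow> bool" where
  "tangential k \<omega> T \<longleftrightarrow>
     (\<forall>is\<in>idx k. \<forall>j<k. (\<Sum>a\<in>UNIV. \<omega> $ a * T (is[j := a])) = 0)"

definition gnorm2 :: "nat \<Rightarrow> tens \<Rightarrow> real" where
  "gnorm2 k T = (\<Sum>is\<in>idx k. (T is)\<^sup>2)"

definition pnorm2 :: "real \<Rightarrow> real \<Rightarrow> (real \<Rightarrow> real) \<Rightarrow> nat
    \<Rightarrow> (real \<Rightarrow> real \<Rightarrow> real^3 \<Rightarrow> tens) \<Rightarrow> real \<Rightarrow> real \<Rightarrow> real^3 \<Rightarrow> real" where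
  "pnorm2 M Q rs k \<xi> u v \<omega> = gnorm2 k (\<xi> u v \<omega>) / (rad M Q rs u v) ^ (2 * k)"

fun pderivs :: "'a::euclidean_space list \<Rightarrow> ('a \<Rightarrow> real) \<Rightarrow> 'a \<Rightarrow> real" where
  "pderivs [] f = f"
| "pderivs (d # ds) f = (\<lambda>x. deriv (\<lambda>t. pderivs ds f (x + t *\<^sub>R d)) 0)"

definition smooth_on_open :: "'a::euclidean_space set \<Rightarrow> ('a \<Rightarrow> real) \<Rightarrow> bool" where
  "smooth_on_open S f \<longleftrightarrow> open S \<and>
     (\<forall>ds. set ds \<subseteq> Basis \<longrightarrow> continuous_on S (pderivs ds f) \<and>
        (\<forall>d\<in>Basis. \<forall>x\<in>S. (\<lambda>t. pderivs ds f (x + t *\<^sub>R d)) differentiable (at 0)))"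

definition region :: "real \<Rightarrow> real \<Rightarrow> (real \<times> real \<times> (real^3)) set" where
  "region u0 v0 = {(u, v, \<omega>). u \<ge> u0 \<and> v \<ge> v0 \<and> \<omega> \<in> sphere 0 1}"

definition S2_tensor_field :: "nat \<Rightarrow> real \<Rightarrow> real \<Rightarrow> (real \<Rightarrow> real \<Rightarrow> real^3 \<Rightarrow> tens) \<Rightarrow> bool" where
  "S2_tensor_field k u0 v0 \<xi> \<longleftrightarrow>
     (\<forall>(u, v, \<omega>)\<in>region u0 v0. tangential k \<omega> (\<xi> u v \<omega>)) \<and>
     (\<forall>is\<in>idx k. \<exists>S f. smooth_on_open S f \<and> region u0 v0 \<subseteq> S \<and>
        (\<forall>(u, v, \<omega>)\<in>region u0 v0. f (u, v, \<omega>) = \<xi> u v \<omega> is))"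

text \<open>Omega nabla_4 xi for a covariant k-tensor: in angular components
  Omega nabla_4 xi = d_v xi - k (Omega^2 / r) xi, since chi = (Omega / r) g (Omega tr chi = 2 Omega^2/r).\<close>
definition Om_nabla4 :: "real \<Rightarrow> real \<Rightarrow> (real \<Rightarrow> real) \<Rightarrow> nat \<Rightarrow> real
    \<Rightarrow> (real \<Rightarrow> real \<Rightarrow> real^3 \<Rightarrow> tens) \<Rightarrow> real \<Rightarrow> real \<Rightarrow> real^3 \<Rightarrow> tens" where
  "Om_nabla4 M Q rs k v0 \<xi> u v \<omega> = (\<lambda>is.
     vector_derivative (\<lambda>v'. \<xi> u v' \<omega> is) (at v within {v0..})
     - real k * Om2uv M Q rs u v / rad M Q rs u v * \<xi> u v \<omega> is)"

definition sph :: "real \<Rightarrow> real \<Rightarrow> real^3" where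
  "sph \<theta> \<phi> = vector [sin \<theta> * cos \<phi>, sin \<theta> * sin \<phi>, cos \<theta>]"

definition sph_int :: "(real^3 \<Rightarrow> ennreal) \<Rightarrow> ennreal" where
  "sph_int f = (\<integral>\<^sup>+ \<theta>. (\<integral>\<^sup>+ \<phi>. f (sph \<theta> \<phi>) * ennreal (sin \<theta>)
       * indicator {0..2*pi} \<phi> \<partial>lborel) * indicator {0..pi} \<theta> \<partial>lborel)"

definition L2sq :: "real \<Rightarrow> real \<Rightarrow> (real \<Rightarrow> real) \<Rightarrow> nat
    \<Rightarrow> (real \<Rightarrow> real \<Rightarrow> real^3 \<Rightarrow> tens) \<Rightarrow> real \<Rightarrow> real \<Rightarrow> ennreal" where
  "L2sq M Q rs k \<xi> u v = sph_int (\<lambda>\<omega>. ennreal (pnorm2 M Q rs k \<xi> u v \<omega>))"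

definition flux :: "real \<Rightarrow> real \<Rightarrow> (real \<Rightarrow> real) \<Rightarrow> nat
    \<Rightarrow> (real \<Rightarrow> real \<Rightarrow> real^3 \<Rightarrow> tens) \<Rightarrow> real \<Rightarrow> real \<Rightarrow> ennreal" where
  "flux M Q rs k \<Xi> u v0 = (\<integral>\<^sup>+ v. sph_int (\<lambda>\<omega>. ennreal (Om2uv M Q rs u v * (rad M Q rs u v)\<^sup>2
       * pnorm2 M Q rs k \<Xi> u v \<omega>)) * indicator {v0..} v \<partial>lborel)"

definition bulk :: "real \<Rightarrow> real \<Rightarrow> (real \<Rightarrow> real) \<Rightarrow> nat
    \<Rightarrow> (real \<Rightarrow> real \<Rightarrow> real^3 \<Rightarrow> tens) \<Rightarrow> real \<Rightarrow> real \<Rightarrow> ennreal" where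
  "bulk M Q rs k \<xi> u v0 = (\<integral>\<^sup>+ v. sph_int (\<lambda>\<omega>. ennreal (Om2uv M Q rs u v / (rad M Q rs u v)\<^sup>2
       * pnorm2 M Q rs k \<xi> u v \<omega>)) * indicator {v0..} v \<partial>lborel)"

end

theory Submission
  imports Defs
begin

text \<open>
  In the frame of the unit sphere the transport equation reads
  \<open>\<partial>\<^sub>v \<xi> = k \<Omega>\<^sup>2/r \<xi> + \<Omega>\<^sup>2 \<Xi>\<close>, and since \<open>\<partial>\<^sub>v r = \<Omega>\<^sup>2\<close> the weight \<open>r\<^sup>-\<^sup>2\<^sup>k\<close> in \<open>|\<xi>|\<^sup>2\<close>
  absorbs the first term: \<open>\<partial>\<^sub>v |\<xi>|\<^sup>2 = 2 \<Omega>\<^sup>2 \<langle>\<xi>, \<Xi>\<rangle>\<close>. On each generator of the cone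
  the cross term is controlled by a weighted AM-GM inequality, which makes the functionals
  \<open>r/(r - r\<^sub>+) |\<xi>|\<^sup>2 - r\<^sub>+\<^sup>-\<^sup>1 \<integral> \<Omega>\<^sup>2 r\<^sup>2 |\<Xi>|\<^sup>2\<close> and
  \<open>(1 + r\<^sub>+/r) |\<xi>|\<^sup>2 + r\<^sub>+/2 \<integral> \<Omega>\<^sup>2 r\<^sup>-\<^sup>2 |\<xi>|\<^sup>2 - 8/r\<^sub>+ \<integral> \<Omega>\<^sup>2 r\<^sup>2 |\<Xi>|\<^sup>2\<close>
  nonincreasing in \<open>v\<close>. Both estimates therefore hold pointwise on the sphere, with
  \<open>C = 16/r\<^sub>+\<close>, and Tonelli's theorem integrates them over \<open>S\<^sup>2\<close>.

  That \<open>r(u,v)\<close> is well defined rests on \<open>r\<^sub>*\<close> mapping \<open>(r\<^sub>+, \<infinity>)\<close> onto the reals: \<open>r\<^sub>*\<close>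
  grows at least like \<open>r\<close>, and \<open>\<Omega>\<^sup>2 \<le> (r - r\<^sub>+)/r\<^sub>+\<close> forces \<open>r\<^sub>* \<le> r\<^sub>+ log (r - r\<^sub>+) + c\<close>
  near the horizon, also in the extremal case.
\<close>

section \<open>The Reissner--Nordstroem metric function\<close>

locale rn_parameters =
  fixes M Q :: real
  assumes M_pos: "M > 0" and abs_Q_le_M: "\<bar>Q\<bar> \<le> M"
begin

lemma sqrt_discriminant_bounds: "0 \<le> sqrt (M\<^sup>2 - Q\<^sup>2)" "sqrt (M\<^sup>2 - Q\<^sup>2) \<le> M"
proof -
  have "Q\<^sup>2 \<le> M\<^sup>2" using abs_Q_le_M abs_le_square_iff by fastforce
  then show "0 \<le> sqrt (M\<^sup>2 - Q\<^sup>2)" by simp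
  show "sqrt (M\<^sup>2 - Q\<^sup>2) \<le> M"
    using M_pos real_sqrt_le_mono[of "M\<^sup>2 - Q\<^sup>2" "M\<^sup>2"] by simp
qed

lemma rplus_ge_M: "rplus M Q \<ge> M"
  using sqrt_discriminant_bounds unfolding rplus_def by simp

lemma rplus_pos: "rplus M Q > 0"
  using rplus_ge_M M_pos by linarith

lemma Om2_factored:
  assumes "\<rho> > 0"
  shows "Om2 M Q \<rho> = (\<rho> - rplus M Q) * (\<rho> - (M - sqrt (M\<^sup>2 - Q\<^sup>2))) / \<rho>\<^sup>2"
proof -
  have "(sqrt (M\<^sup>2 - Q\<^sup>2))\<^sup>2 = M\<^sup>2 - Q\<^sup>2"
    using sqrt_discriminant_bounds(1) by simp
  then show ?thesis
    using assms unfolding Om2_def rplus_def by (simp add: field_simps power2_eq_square)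
qed

lemma Om2_pos:
  assumes "\<rho> > rplus M Q"
  shows "Om2 M Q \<rho> > 0"
proof -
  have "\<rho> - (M - sqrt (M\<^sup>2 - Q\<^sup>2)) > 0"
    using assms sqrt_discriminant_bounds unfolding rplus_def by linarith
  then show ?thesis
    using Om2_factored[of \<rho>] assms rplus_pos by simp
qed

lemma Om2_le_1:
  assumes "\<rho> > rplus M Q"
  shows "Om2 M Q \<rho> \<le> 1"
proof -
  have \<rho>: "\<rho> > 0" "\<rho> \<ge> M" using assms rplus_ge_M rplus_pos by linarith+
  have "Q\<^sup>2 \<le> M\<^sup>2" using abs_Q_le_M abs_le_square_iff by fastforce
  also have "\<dots> \<le> 2 * M * \<rho>" using \<rho> M_pos by (simp add: power2_eq_square mult_mono)
  finally have "Q\<^sup>2 / \<rho>\<^sup>2 \<le> 2 * M / \<rho>" using \<rho> by (simp add: field_simps power2_eq_square)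
  then show ?thesis unfolding Om2_def by simp
qed

lemma Om2_le_linear:
  assumes "\<rho> > rplus M Q"
  shows "Om2 M Q \<rho> \<le> (\<rho> - rplus M Q) / rplus M Q"
proof -
  have \<rho>: "\<rho> > 0" using assms rplus_pos by linarith
  have "(\<rho> - (M - sqrt (M\<^sup>2 - Q\<^sup>2))) / \<rho>\<^sup>2 \<le> 1 / \<rho>"
    using \<rho> sqrt_discriminant_bounds by (simp add: field_simps power2_eq_square)
  also have "\<dots> \<le> 1 / rplus M Q" using assms rplus_pos by (simp add: frac_le)
  finally show ?thesis
    using Om2_factored[OF \<rho>] assms mult_left_mono[of _ _ "\<rho> - rplus M Q"] by fastforce
qed

end

section \<open>Tortoise coordinate and area radius\<close>

locale rn_double_null = rn_parameters +
  fixes rs :: "real \<Rightarrow> real"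
  assumes tortoise: "is_tortoise M Q rs"
begin

lemma tortoise_has_derivative:
  "\<rho> > rplus M Q \<Longrightarrow> (rs has_real_derivative 1 / Om2 M Q \<rho>) (at \<rho>)"
  using tortoise unfolding is_tortoise_def by blast

lemma tortoise_continuous_on: "continuous_on {rplus M Q<..} rs"
  by (rule DERIV_continuous_on[of _ _ "\<lambda>\<rho>. 1 / Om2 M Q \<rho>"])
     (auto intro: has_field_derivative_at_within tortoise_has_derivative)

lemma tortoise_strict_mono: "strict_mono_on {rplus M Q<..} rs"
proof (rule strict_mono_onI)
  fix a b assume "a \<in> {rplus M Q<..}" "b \<in> {rplus M Q<..}" "a < b"
  then show "rs a < rs b"
  proof (intro DERIV_pos_imp_increasing[OF \<open>a < b\<close>])
    fix x assume "a \<le> x" "x \<le> b"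
    then have x: "x > rplus M Q" using \<open>a \<in> {rplus M Q<..}\<close> by simp
    show "\<exists>y. DERIV rs x :> y \<and> y > 0"
      using tortoise_has_derivative[OF x] Om2_pos[OF x] by auto
  qed
qed

lemma tortoise_diff_ge:
  assumes "rplus M Q < a" "a \<le> b"
  shows "b - a \<le> rs b - rs a"
proof -
  have "(\<lambda>x. rs x - x) a \<le> (\<lambda>x. rs x - x) b"
  proof (rule DERIV_nonneg_imp_increasing_open[OF assms(2)])
    fix x assume "a < x" "x < b"
    then have x: "x > rplus M Q" using assms by linarith
    have "1 / Om2 M Q x \<ge> 1" using Om2_pos[OF x] Om2_le_1[OF x] by simp
    then show "\<exists>y. ((\<lambda>x. rs x - x) has_real_derivative y) (at x) \<and> y \<ge> 0"
      using tortoise_has_derivative[OF x] by (auto intro!: derivative_eq_intros)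
  next
    show "continuous_on {a..b} (\<lambda>x. rs x - x)"
      using tortoise_continuous_on assms
      by (intro continuous_intros) (auto elim: continuous_on_subset)
  qed
  then show ?thesis by simp
qed

lemma tortoise_diff_le_log:
  assumes "rplus M Q < a" "a \<le> b"
  shows "rs b - rs a \<ge> rplus M Q * (ln (b - rplus M Q) - ln (a - rplus M Q))"
proof -
  let ?L = "\<lambda>x. rs x - rplus M Q * ln (x - rplus M Q)"
  have "?L a \<le> ?L b"
  proof (rule DERIV_nonneg_imp_increasing_open[OF assms(2)])
    fix x assume "a < x" "x < b"
    then have x: "x > rplus M Q" using assms by linarith
    have "rplus M Q / (x - rplus M Q) \<le> 1 / Om2 M Q x"
      using Om2_pos[OF x] Om2_le_linear[OF x] x rplus_pos by (simp add: field_simps)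
    then show "\<exists>y. (?L has_real_derivative y) (at x) \<and> y \<ge> 0"
      using tortoise_has_derivative[OF x] x by (auto intro!: derivative_eq_intros)
  next
    show "continuous_on {a..b} ?L"
      using tortoise_continuous_on assms
      by (intro continuous_intros) (auto elim: continuous_on_subset)
  qed
  then show ?thesis by (simp add: algebra_simps)
qed

lemma tortoise_surj: "\<exists>\<rho>>rplus M Q. rs \<rho> = y"
proof -
  define \<rho>\<^sub>1 where "\<rho>\<^sub>1 = rplus M Q + 1"
  define d where "d = \<bar>y\<bar> + \<bar>rs \<rho>\<^sub>1\<bar> + 1"
  define a where "a = rplus M Q + exp (- d / rplus M Q)"
  define b where "b = \<rho>\<^sub>1 + d"
  have "exp (- d / rplus M Q) < 1" using rplus_pos by (simp add: d_def divide_neg_pos)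
  then have a: "rplus M Q < a" "a \<le> \<rho>\<^sub>1" unfolding a_def \<rho>\<^sub>1_def by auto
  have b: "rplus M Q < \<rho>\<^sub>1" "\<rho>\<^sub>1 \<le> b" unfolding b_def \<rho>\<^sub>1_def d_def by auto
  have "rs a \<le> y"
    using tortoise_diff_le_log[OF a] rplus_pos unfolding a_def \<rho>\<^sub>1_def d_def by simp
  moreover have "y \<le> rs b"
    using tortoise_diff_ge[OF b] unfolding b_def d_def by linarith
  moreover have "continuous_on {a..b} rs"
    using tortoise_continuous_on a by (auto elim: continuous_on_subset)
  ultimately obtain \<rho> where "a \<le> \<rho>" "\<rho> \<le> b" "rs \<rho> = y"
    using IVT'[of rs a y b] a b by auto
  moreover have "\<rho> > rplus M Q" using a(1) \<open>a \<le> \<rho>\<close> by linarith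
  ultimately show ?thesis by blast
qed

lemma rad_unique:
  assumes "\<rho> > rplus M Q" "rs \<rho> = v - u"
  shows "rad M Q rs u v = \<rho>"
  unfolding rad_def
  using assms strict_mono_on_eqD[OF tortoise_strict_mono] by (intro the_equality) auto

lemma rad_gt_rplus: "rad M Q rs u v > rplus M Q"
  and tortoise_rad: "rs (rad M Q rs u v) = v - u"
  using tortoise_surj[of "v - u"] rad_unique by auto

lemma rad_pos: "rad M Q rs u v > 0"
  using rad_gt_rplus[of u v] rplus_pos by linarith

lemma rad_neq_0: "rad M Q rs u v \<noteq> 0"
  using rad_pos[of u v] by simp

lemma Om2uv_pos: "Om2uv M Q rs u v > 0"
  unfolding Om2uv_def using Om2_pos[OF rad_gt_rplus] .

lemma rad_has_derivative: "((\<lambda>v. rad M Q rs u v) has_real_derivative Om2uv M Q rs u v) (at v)"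
proof -
  let ?f = "\<lambda>\<rho>. rs \<rho> + u" and ?g = "\<lambda>v. rad M Q rs u v"
  have inverse: "?g (?f \<rho>) = \<rho>" if "\<rho> > rplus M Q" for \<rho>
    using rad_unique[OF that] by simp
  have "isCont ?g (?f (?g v))"
  proof (rule isCont_inverse_function2[where a="(rplus M Q + ?g v) / 2" and b="?g v + 1"
        and f="\<lambda>\<rho>. rs \<rho> + u" and g="\<lambda>v. rad M Q rs u v"])
    fix z assume "(rplus M Q + ?g v) / 2 \<le> z" "z \<le> ?g v + 1"
    then have "z > rplus M Q" using rad_gt_rplus[of u v] by (simp add: field_simps)
    then show "?g (?f z) = z" "isCont ?f z"
      using inverse by (auto intro!: continuous_intros DERIV_isCont[OF tortoise_has_derivative])
  qed (use rad_gt_rplus[of u v] in auto)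
  then have "isCont ?g v" by (simp add: tortoise_rad)
  moreover have "(?f has_real_derivative 1 / Om2 M Q (?g v)) (at (?g v))"
    using tortoise_has_derivative[OF rad_gt_rplus] by (auto intro!: derivative_eq_intros)
  ultimately have "(?g has_real_derivative inverse (1 / Om2 M Q (?g v))) (at v)"
    using Om2_pos[OF rad_gt_rplus, of u v] inverse rad_gt_rplus
    by (intro DERIV_inverse_function[of ?f _ _ _ "v - 1" "v + 1"]) (simp_all add: tortoise_rad)
  then show ?thesis unfolding Om2uv_def by simp
qed

lemma rad_continuous_on: "continuous_on S (\<lambda>v. rad M Q rs u v)"
  by (rule DERIV_continuous_on[OF has_field_derivative_at_within[OF rad_has_derivative]])

lemma Om2uv_continuous_on: "continuous_on S (\<lambda>v. Om2uv M Q rs u v)"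
  unfolding Om2uv_def Om2_def by (intro continuous_intros rad_continuous_on) (simp_all add: rad_neq_0)

end

lemma ennreal_linear_combination:
  fixes a b c d :: real
  assumes "0 \<le> a" "0 \<le> b" "0 \<le> c" "0 \<le> d"
  shows "ennreal (a * b + c * d) = ennreal a * ennreal b + ennreal c * ennreal d"
  using assms by (simp add: ennreal_plus ennreal_mult)

lemma ennreal_indicator_mult: "ennreal (indicator S x * g x) = ennreal (g x) * indicator S x"
  by (simp add: indicator_def)

lemma nn_integral_Icc_eq_integral:
  fixes g :: "real \<Rightarrow> real"
  assumes "continuous_on {a..b} g" "\<And>x. x \<in> {a..b} \<Longrightarrow> g x \<ge> 0"
  shows "(\<integral>\<^sup>+x. ennreal (g x) * indicator {a..b} x \<partial>lborel) = ennreal (integral {a..b} g)"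
proof -
  have "(g has_integral integral {a..b} g) {a..b}"
    using integrable_continuous_real[OF assms(1)] by (simp add: has_integral_integral)
  from nn_integral_has_integral_lebesgue[OF assms(2) this] show ?thesis
    by (simp add: ennreal_indicator_mult)
qed

lemma borel_measurable_ennreal_indicator:
  fixes g :: "'a::euclidean_space \<Rightarrow> real"
  assumes "continuous_on S g" "closed S"
  shows "(\<lambda>x. ennreal (g x) * indicator S x) \<in> borel_measurable borel"
proof -
  have "(\<lambda>x. indicator S x *\<^sub>R g x) \<in> borel_measurable borel"
    using borel_measurable_continuous_on_indicator[OF borel_closed[OF assms(2)] assms(1)] .
  then have "(\<lambda>x. ennreal (indicator S x *\<^sub>R g x)) \<in> borel_measurable borel" by measurable
  then show ?thesis by (simp add: ennreal_indicator_mult)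
qed

lemma nn_integral_Ici_le:
  fixes g :: "real \<Rightarrow> real"
  assumes g: "continuous_on {a..} g" "\<And>x. x \<ge> a \<Longrightarrow> g x \<ge> 0"
    and bound: "\<And>b. b \<ge> a \<Longrightarrow> ennreal (integral {a..b} g) \<le> B"
  shows "(\<integral>\<^sup>+x. ennreal (g x) * indicator {a..} x \<partial>lborel) \<le> B"
proof -
  define f where "f n x = ennreal (g x) * indicator {a..a + real n} x" for n :: nat and x
  have "incseq f"
    unfolding f_def incseq_def le_fun_def by (auto intro!: mult_left_mono simp: indicator_def)
  moreover have "f n \<in> borel_measurable lborel" for n
    unfolding f_def using borel_measurable_ennreal_indicator[OF continuous_on_subset[OF g(1)]] by auto
  ultimately have "(\<integral>\<^sup>+x. (SUP n. f n x) \<partial>lborel) = (SUP n. integral\<^sup>N lborel (f n))"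
    by (rule nn_integral_monotone_convergence_SUP)
  moreover have "(SUP n. f n x) = ennreal (g x) * indicator {a..} x" for x
  proof (cases "x \<ge> a")
    case True
    obtain n :: nat where "x - a \<le> real n" using real_arch_simple by blast
    then have "f n x = ennreal (g x) * indicator {a..} x" using True by (simp add: f_def indicator_def)
    moreover have "f m x \<le> ennreal (g x) * indicator {a..} x" for m
      using True by (simp add: f_def indicator_def)
    ultimately show ?thesis by (metis (mono_tags) SUP_upper UNIV_I SUP_least antisym)
  qed (simp add: f_def indicator_def)
  moreover have "integral\<^sup>N lborel (f n) \<le> B" for n
    unfolding f_def
    by (subst nn_integral_Icc_eq_integral) (auto intro: continuous_on_subset[OF g(1)] g(2) bound)
  ultimately show ?thesis by (simp add: SUP_least)
qed

lemma integral_le_nn_integral_Ici: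
  fixes g :: "real \<Rightarrow> real"
  assumes g: "continuous_on {a..} g" "\<And>x. x \<ge> a \<Longrightarrow> g x \<ge> 0" and "b \<ge> a"
  shows "ennreal (integral {a..b} g) \<le> (\<integral>\<^sup>+x. ennreal (g x) * indicator {a..} x \<partial>lborel)"
proof -
  have "ennreal (integral {a..b} g) = (\<integral>\<^sup>+x. ennreal (g x) * indicator {a..b} x \<partial>lborel)"
    by (rule nn_integral_Icc_eq_integral[symmetric]) (auto intro: continuous_on_subset[OF g(1)] g(2))
  also have "\<dots> \<le> (\<integral>\<^sup>+x. ennreal (g x) * indicator {a..} x \<partial>lborel)"
    by (intro nn_integral_mono mult_left_mono) (auto simp: indicator_def)
  finally show ?thesis .
qed

section \<open>Energy estimates along an outgoing null generator\<close>

lemma DERIV_within_nonpos_imp_decreasing: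
  fixes f f' :: "real \<Rightarrow> real"
  assumes "a \<le> b"
    and deriv: "\<And>x. x \<in> {a..b} \<Longrightarrow> (f has_real_derivative f' x) (at x within {a..b})"
    and nonpos: "\<And>x. a < x \<Longrightarrow> x < b \<Longrightarrow> f' x \<le> 0"
  shows "f b \<le> f a"
proof (rule DERIV_nonpos_imp_decreasing_open[OF \<open>a \<le> b\<close>])
  fix x assume x: "a < x" "x < b"
  then have "(f has_real_derivative f' x) (at x)"
    using deriv[of x] at_within_Icc_at[OF x] by auto
  then show "\<exists>y. DERIV f x :> y \<and> y \<le> 0" using nonpos[OF x] by blast
next
  show "continuous_on {a..b} f" by (rule DERIV_continuous_on[OF deriv])
qed

lemma two_mult_le_weighted_squares:
  fixes a b \<epsilon> :: real
  assumes "\<epsilon> > 0"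
  shows "2 * a * b \<le> \<epsilon> * a\<^sup>2 + b\<^sup>2 / \<epsilon>"
proof -
  have "0 \<le> (\<epsilon> * a - b)\<^sup>2 / \<epsilon>" using assms by simp
  also have "\<dots> = \<epsilon> * a\<^sup>2 - 2 * a * b + b\<^sup>2 / \<epsilon>"
    using assms by (simp add: field_simps power2_eq_square)
  finally show ?thesis by simp
qed

lemma weighted_sum_cross_le:
  fixes x y :: "'i \<Rightarrow> real"
  assumes "\<epsilon> > 0" "R > 0"
  shows "2 * ((\<Sum>i\<in>I. x i * y i) / R) \<le> \<epsilon> * ((\<Sum>i\<in>I. (x i)\<^sup>2) / R) + ((\<Sum>i\<in>I. (y i)\<^sup>2) / R) / \<epsilon>"
proof -
  have "2 * (\<Sum>i\<in>I. x i * y i) = (\<Sum>i\<in>I. 2 * x i * y i)"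
    by (simp add: sum_distrib_left mult.assoc)
  also have "\<dots> \<le> (\<Sum>i\<in>I. \<epsilon> * (x i)\<^sup>2 + (y i)\<^sup>2 / \<epsilon>)"
    by (intro sum_mono two_mult_le_weighted_squares assms)
  also have "\<dots> = \<epsilon> * (\<Sum>i\<in>I. (x i)\<^sup>2) + (\<Sum>i\<in>I. (y i)\<^sup>2) / \<epsilon>"
    by (simp add: sum.distrib sum_distrib_left sum_divide_distrib)
  finally show ?thesis
    using assms(2) by (simp add: divide_right_mono add_divide_distrib[symmetric] field_simps)
qed

lemma rescaled_sum_squares_has_derivative:
  fixes x y :: "'i \<Rightarrow> real \<Rightarrow> real" and r :: "real \<Rightarrow> real" and k :: nat
  assumes r: "(r has_real_derivative Om) (at v within S)" "r v \<noteq> 0"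
    and x: "\<And>i. i \<in> I \<Longrightarrow> (x i has_real_derivative real k * Om / r v * x i v + Om * y i v) (at v within S)"
  shows "((\<lambda>v. (\<Sum>i\<in>I. (x i v)\<^sup>2) / r v ^ (2 * k)) has_real_derivative
      2 * Om * ((\<Sum>i\<in>I. x i v * y i v) / r v ^ (2 * k))) (at v within S)"
proof -
  let ?D = "\<lambda>i. real k * Om / r v * x i v + Om * y i v"
  have sum: "((\<lambda>v. \<Sum>i\<in>I. (x i v)\<^sup>2) has_real_derivative (\<Sum>i\<in>I. 2 * x i v * ?D i)) (at v within S)"
    using DERIV_power[OF x, of _ 2] by (intro DERIV_sum) (simp add: mult_ac)
  have sum_eq: "(\<Sum>i\<in>I. 2 * x i v * ?D i)
      = 2 * real k * Om / r v * (\<Sum>i\<in>I. (x i v)\<^sup>2) + 2 * Om * (\<Sum>i\<in>I. x i v * y i v)"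
    by (simp add: sum_distrib_left sum.distrib algebra_simps power2_eq_square sum_divide_distrib)
  have pow_eq: "real (2 * k) * (Om * r v ^ (2 * k - Suc 0)) = 2 * real k * Om * r v ^ (2 * k) / r v"
    using r(2) by (cases k) (simp_all add: field_simps)
  show ?thesis
  proof (rule DERIV_cong[OF DERIV_divide[OF sum DERIV_power[OF r(1), of "2 * k"]]])
    show "((\<Sum>i\<in>I. 2 * x i v * ?D i) * r v ^ (2 * k)
        - (\<Sum>i\<in>I. (x i v)\<^sup>2) * (real (2 * k) * (Om * r v ^ (2 * k - Suc 0))))
        / (r v ^ (2 * k) * r v ^ (2 * k))
      = 2 * Om * ((\<Sum>i\<in>I. x i v * y i v) / r v ^ (2 * k))"
      unfolding sum_eq pow_eq using r(2) by (simp add: field_simps)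
  qed (use r(2) in simp)
qed

text \<open>The data along one generator of an outgoing cone, as functions of \<open>v\<close>: \<open>r\<close> is the area
  radius, \<open>Om\<close> is \<open>\<Omega>\<^sup>2\<close>, and \<open>p\<close>, \<open>q\<close>, \<open>s\<close> stand for \<open>|\<xi>|\<^sup>2\<close>, \<open>|\<Xi>|\<^sup>2\<close> and \<open>\<langle>\<xi>, \<Xi>\<rangle>\<close>.\<close>
locale outgoing_cone_energy =
  fixes r Om p q s :: "real \<Rightarrow> real" and rp v0 :: real
  assumes rp_pos: "rp > 0" and r_gt: "\<And>v. r v > rp"
    and r_has_derivative: "\<And>v. (r has_real_derivative Om v) (at v)"
    and Om_pos: "\<And>v. Om v > 0" and Om_continuous: "continuous_on UNIV Om"
    and p_has_derivative: "\<And>v. v \<ge> v0 \<Longrightarrow> (p has_real_derivative 2 * Om v * s v) (at v within {v0..})"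
    and q_continuous: "continuous_on {v0..} q"
    and p_nonneg: "\<And>v. p v \<ge> 0" and q_nonneg: "\<And>v. q v \<ge> 0"
    and cross_le: "\<And>\<epsilon> v. \<epsilon> > 0 \<Longrightarrow> 2 * s v \<le> \<epsilon> * p v + q v / \<epsilon>"
begin

lemma r_pos: "r v > 0"
  using r_gt[of v] rp_pos by linarith

lemma r_continuous_on: "continuous_on S r"
  by (rule DERIV_continuous_on[OF has_field_derivative_at_within[OF r_has_derivative]])

lemma p_has_derivative_Icc:
  "t \<in> {v0..v} \<Longrightarrow> (p has_real_derivative 2 * Om t * s t) (at t within {v0..v})"
  by (rule has_field_derivative_subset[OF p_has_derivative]) auto

lemma p_continuous: "continuous_on {v0..} p"
  by (rule DERIV_continuous_on[OF p_has_derivative]) simp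

lemma integral_has_derivative_Icc:
  assumes "continuous_on {v0..} g" "t \<in> {v0..v}"
  shows "((\<lambda>t. integral {v0..t} g) has_real_derivative g t) (at t within {v0..v})"
  using integral_has_real_derivative[OF continuous_on_subset[OF assms(1)] assms(2)] by auto

lemma flux_density_continuous: "continuous_on {v0..} (\<lambda>t. Om t * (r t)\<^sup>2 * q t)"
  by (intro continuous_intros q_continuous r_continuous_on continuous_on_subset[OF Om_continuous]) auto

lemma flux_density_nonneg: "Om t * (r t)\<^sup>2 * q t \<ge> 0"
  using Om_pos[of t] q_nonneg[of t] by simp

lemma flux_integral_nonneg: "integral {v0..v} (\<lambda>t. Om t * (r t)\<^sup>2 * q t) \<ge> 0"
  using flux_density_nonneg
  by (cases "v0 \<le> v") (auto intro!: integral_nonneg integrable_continuous_real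
      continuous_on_subset[OF flux_density_continuous])

lemma bulk_density_continuous: "continuous_on {v0..} (\<lambda>t. Om t / (r t)\<^sup>2 * p t)"
  using r_pos
  by (intro continuous_intros p_continuous r_continuous_on continuous_on_subset[OF Om_continuous])
     (auto simp: less_imp_neq[symmetric])

lemma energy_bound:
  assumes "v \<ge> v0"
  shows "p v \<le> r v0 / (r v0 - rp) * p v0 + 1 / rp * integral {v0..v} (\<lambda>t. Om t * (r t)\<^sup>2 * q t)"
proof -
  define F where "F t = Om t * (r t)\<^sup>2 * q t" for t
  define \<Phi> where "\<Phi> t = r t / (r t - rp) * p t - 1 / rp * integral {v0..t} F" for t
  define \<Phi>' where "\<Phi>' t = (Om t * (r t - rp) - r t * Om t) / ((r t - rp) * (r t - rp)) * p t
      + r t / (r t - rp) * (2 * Om t * s t) - 1 / rp * F t" for t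
  have "\<Phi> v \<le> \<Phi> v0"
  proof (rule DERIV_within_nonpos_imp_decreasing[OF assms, of _ \<Phi>'])
    fix t assume t: "t \<in> {v0..v}"
    have "r t - rp \<noteq> 0" using r_gt[of t] by simp
    then have "((\<lambda>t. r t / (r t - rp)) has_real_derivative
        (Om t * (r t - rp) - r t * Om t) / ((r t - rp) * (r t - rp))) (at t within {v0..v})"
      using DERIV_divide[OF r_has_derivative DERIV_diff[OF r_has_derivative DERIV_const]]
      by (simp add: has_field_derivative_at_within)
    then show "(\<Phi> has_real_derivative \<Phi>' t) (at t within {v0..v})"
      unfolding \<Phi>_def \<Phi>'_def F_def
      by (rule DERIV_diff[OF DERIV_mult'[OF _ p_has_derivative_Icc[OF t]]
          DERIV_cmult[OF integral_has_derivative_Icc[OF flux_density_continuous t]], THEN DERIV_cong])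
         (simp add: algebra_simps)
  next
    fix t
    \<comment> \<open>this choice of \<open>\<epsilon>\<close> matches the cross term against the derivative of the weight
      \<open>r/(r - r\<^sub>+)\<close>, which is \<open>-\<Omega>\<^sup>2 r\<^sub>+/(r - r\<^sub>+)\<^sup>2\<close>\<close>
    define \<epsilon> where "\<epsilon> = rp / ((r t - rp) * r t)"
    have d: "r t - rp > 0" using r_gt[of t] by simp
    then have \<epsilon>: "\<epsilon> > 0" using rp_pos r_pos[of t] by (simp add: \<epsilon>_def)
    have "r t / (r t - rp) * (2 * s t) \<le> r t / (r t - rp) * (\<epsilon> * p t + q t / \<epsilon>)"
      using cross_le[OF \<epsilon>] d r_pos[of t] by (intro mult_left_mono) auto
    also have "\<dots> = (r t / (r t - rp) * \<epsilon>) * p t + (r t / (r t - rp) / \<epsilon>) * q t"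
      by (simp add: distrib_left)
    also have "\<dots> = rp / (r t - rp)\<^sup>2 * p t + (r t)\<^sup>2 * q t / rp"
      using d r_pos[of t] rp_pos by (simp add: \<epsilon>_def power2_eq_square)
    finally have cross: "r t / (r t - rp) * (2 * s t) \<le> rp / (r t - rp)\<^sup>2 * p t + (r t)\<^sup>2 * q t / rp" .
    have "\<Phi>' t = Om t * (r t / (r t - rp) * (2 * s t) - rp / (r t - rp)\<^sup>2 * p t - (r t)\<^sup>2 * q t / rp)"
      using d rp_pos by (simp add: \<Phi>'_def F_def field_simps power2_eq_square)
    also have "\<dots> \<le> 0"
      using cross Om_pos[of t] by (intro mult_nonneg_nonpos) auto
    finally show "\<Phi>' t \<le> 0" .
  qed
  moreover have "p v \<le> r v / (r v - rp) * p v"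
    using r_gt[of v] rp_pos mult_right_mono[OF _ p_nonneg[of v], of 1 "r v / (r v - rp)"]
    by (simp add: field_simps)
  ultimately show ?thesis unfolding \<Phi>_def F_def by simp
qed

lemma bulk_bound:
  assumes "v \<ge> v0"
  shows "integral {v0..v} (\<lambda>t. Om t / (r t)\<^sup>2 * p t)
    \<le> 4 / rp * p v0 + 16 / rp\<^sup>2 * integral {v0..v} (\<lambda>t. Om t * (r t)\<^sup>2 * q t)"
proof -
  define F where "F t = Om t * (r t)\<^sup>2 * q t" for t
  define B where "B t = Om t / (r t)\<^sup>2 * p t" for t
  define H where "H t = 1 + rp / r t" for t
  have H: "H t > 0" "H t \<le> 2" for t
    using r_pos[of t] r_gt[of t] rp_pos by (auto simp: H_def field_simps)
  define \<Psi> where "\<Psi> t = H t * p t + rp / 2 * integral {v0..t} B - 8 / rp * integral {v0..t} F" for t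
  define \<Psi>' where "\<Psi>' t = - (rp * Om t) / (r t * r t) * p t + H t * (2 * Om t * s t)
      + rp / 2 * B t - 8 / rp * F t" for t
  have "\<Psi> v \<le> \<Psi> v0"
  proof (rule DERIV_within_nonpos_imp_decreasing[OF assms, of _ \<Psi>'])
    fix t assume t: "t \<in> {v0..v}"
    have "r t \<noteq> 0" using r_pos[of t] by simp
    then have "(H has_real_derivative - (rp * Om t) / (r t * r t)) (at t within {v0..v})"
      unfolding H_def using DERIV_add[OF DERIV_const DERIV_divide[OF DERIV_const r_has_derivative]]
      by (simp add: has_field_derivative_at_within)
    then show "(\<Psi> has_real_derivative \<Psi>' t) (at t within {v0..v})"
      unfolding \<Psi>_def \<Psi>'_def B_def F_def
      by (rule DERIV_diff[OF DERIV_add[OF DERIV_mult'[OF _ p_has_derivative_Icc[OF t]]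
          DERIV_cmult[OF integral_has_derivative_Icc[OF bulk_density_continuous t]]]
          DERIV_cmult[OF integral_has_derivative_Icc[OF flux_density_continuous t]], THEN DERIV_cong])
         (simp add: algebra_simps)
  next
    fix t
    \<comment> \<open>half of \<open>-\<Omega>\<^sup>2 r\<^sub>+/r\<^sup>2 p\<close>, the derivative of the weight, absorbs the cross term;
      the other half pays for the bulk term\<close>
    define \<epsilon> where "\<epsilon> = rp / (2 * (r t)\<^sup>2 * H t)"
    have \<epsilon>: "\<epsilon> > 0" using rp_pos r_pos[of t] H by (simp add: \<epsilon>_def)
    have "H t * (2 * s t) \<le> H t * (\<epsilon> * p t + q t / \<epsilon>)"
      using cross_le[OF \<epsilon>] less_imp_le[OF H(1)] by (rule mult_left_mono)
    also have "\<dots> = (H t * \<epsilon>) * p t + (H t / \<epsilon>) * q t"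
      by (simp add: distrib_left)
    also have "\<dots> = rp / (2 * (r t)\<^sup>2) * p t + 2 * (H t)\<^sup>2 * (r t)\<^sup>2 * q t / rp"
      using r_pos[of t] rp_pos H(1)[of t] by (simp add: \<epsilon>_def power2_eq_square)
    also have "\<dots> \<le> rp / (2 * (r t)\<^sup>2) * p t + 8 * (r t)\<^sup>2 * q t / rp"
    proof -
      have "2 * (H t)\<^sup>2 \<le> 8"
        using power_mono[OF H(2)[of t] less_imp_le[OF H(1)[of t]], of 2] by simp
      then show ?thesis
        using q_nonneg[of t] rp_pos mult_right_mono[of "2 * (H t)\<^sup>2" 8 "(r t)\<^sup>2 * q t / rp"]
        by (simp add: mult.assoc)
    qed
    finally have cross: "H t * (2 * s t) \<le> rp / (2 * (r t)\<^sup>2) * p t + 8 * (r t)\<^sup>2 * q t / rp" .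
    have "\<Psi>' t = Om t * (H t * (2 * s t) - rp / (2 * (r t)\<^sup>2) * p t - 8 * (r t)\<^sup>2 * q t / rp)"
      using r_pos[of t] rp_pos by (simp add: \<Psi>'_def B_def F_def field_simps power2_eq_square)
    also have "\<dots> \<le> 0"
      using cross Om_pos[of t] by (intro mult_nonneg_nonpos) auto
    finally show "\<Psi>' t \<le> 0" .
  qed
  then have "H v * p v + rp / 2 * integral {v0..v} B - 8 / rp * integral {v0..v} F \<le> H v0 * p v0"
    by (simp add: \<Psi>_def)
  moreover have "H v * p v \<ge> 0"
    using H(1)[of v] p_nonneg[of v] by simp
  moreover have "H v0 * p v0 \<le> 2 * p v0"
    using mult_right_mono[OF H(2) p_nonneg] .
  ultimately have "rp / 2 * integral {v0..v} B \<le> 2 * p v0 + 8 / rp * integral {v0..v} F"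
    by linarith
  from mult_left_mono[OF this, of "2 / rp"] rp_pos show ?thesis
    unfolding B_def F_def by (simp add: field_simps power2_eq_square)
qed

lemma energy_bound_nn_integral:
  assumes "v \<ge> v0"
  shows "ennreal (p v) \<le> ennreal (r v0 / (r v0 - rp)) * ennreal (p v0)
    + ennreal (1 / rp) * (\<integral>\<^sup>+t. ennreal (Om t * (r t)\<^sup>2 * q t) * indicator {v0..} t \<partial>lborel)"
proof -
  have "r v0 / (r v0 - rp) \<ge> 0" using r_gt[of v0] rp_pos by simp
  then have "ennreal (p v) \<le> ennreal (r v0 / (r v0 - rp)) * ennreal (p v0)
      + ennreal (1 / rp) * ennreal (integral {v0..v} (\<lambda>t. Om t * (r t)\<^sup>2 * q t))"
    using ennreal_leI[OF energy_bound[OF assms]] p_nonneg[of v0] rp_pos flux_integral_nonneg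
    by (subst ennreal_linear_combination[symmetric]) simp_all
  also have "\<dots> \<le> ennreal (r v0 / (r v0 - rp)) * ennreal (p v0)
      + ennreal (1 / rp) * (\<integral>\<^sup>+t. ennreal (Om t * (r t)\<^sup>2 * q t) * indicator {v0..} t \<partial>lborel)"
    using flux_density_nonneg assms
    by (intro add_left_mono mult_left_mono integral_le_nn_integral_Ici flux_density_continuous) auto
  finally show ?thesis .
qed

lemma bulk_bound_nn_integral:
  "(\<integral>\<^sup>+t. ennreal (Om t / (r t)\<^sup>2 * p t) * indicator {v0..} t \<partial>lborel)
    \<le> ennreal (4 / rp) * ennreal (p v0)
      + ennreal (16 / rp\<^sup>2) * (\<integral>\<^sup>+t. ennreal (Om t * (r t)\<^sup>2 * q t) * indicator {v0..} t \<partial>lborel)"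
proof (rule nn_integral_Ici_le[OF bulk_density_continuous])
  show "Om t / (r t)\<^sup>2 * p t \<ge> 0" for t
    using Om_pos[of t] p_nonneg[of t] by simp
  fix v assume v: "v \<ge> v0"
  have "ennreal (integral {v0..v} (\<lambda>t. Om t / (r t)\<^sup>2 * p t)) \<le> ennreal (4 / rp) * ennreal (p v0)
      + ennreal (16 / rp\<^sup>2) * ennreal (integral {v0..v} (\<lambda>t. Om t * (r t)\<^sup>2 * q t))"
    using ennreal_leI[OF bulk_bound[OF v]] p_nonneg[of v0] rp_pos flux_integral_nonneg
    by (subst ennreal_linear_combination[symmetric]) simp_all
  also have "\<dots> \<le> ennreal (4 / rp) * ennreal (p v0)
      + ennreal (16 / rp\<^sup>2) * (\<integral>\<^sup>+t. ennreal (Om t * (r t)\<^sup>2 * q t) * indicator {v0..} t \<partial>lborel)"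
    using flux_density_nonneg v
    by (intro add_left_mono mult_left_mono integral_le_nn_integral_Ici flux_density_continuous) auto
  finally show "ennreal (integral {v0..v} (\<lambda>t. Om t / (r t)\<^sup>2 * p t)) \<le> \<dots>" .
qed

end

section \<open>Integration over the unit sphere\<close>

lemma sph_components:
  "sph \<theta> \<phi> $ 1 = sin \<theta> * cos \<phi>" "sph \<theta> \<phi> $ 2 = sin \<theta> * sin \<phi>" "sph \<theta> \<phi> $ 3 = cos \<theta>"
  unfolding sph_def by simp_all

lemma sph_sphere: "sph \<theta> \<phi> \<in> sphere 0 1"
proof -
  have "(sin \<theta> * cos \<phi>)\<^sup>2 + (sin \<theta> * sin \<phi>)\<^sup>2 + (cos \<theta>)\<^sup>2 = (sin \<theta>)\<^sup>2 * ((sin \<phi>)\<^sup>2 + (cos \<phi>)\<^sup>2) + (cos \<theta>)\<^sup>2"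
    by algebra
  also have "\<dots> = 1" by simp
  finally show ?thesis
    unfolding mem_sphere_0 norm_vec_def L2_set_def sum_3 sph_components by simp
qed

lemma sph_continuous: "continuous_on UNIV (\<lambda>z. sph (fst z) (snd z))"
proof -
  have "continuous_on UNIV (\<lambda>z. sph (fst z) (snd z) $ i)" for i
  proof -
    consider "i = 1" | "i = 2" | "i = 3" using exhaust_3 by blast
    then show ?thesis by cases (simp_all add: sph_components, (intro continuous_intros)+)
  qed
  then show ?thesis
    using continuous_on_vec_lambda[of UNIV "\<lambda>i z. sph (fst z) (snd z) $ i"] by simp
qed

lemma borel_measurable_continuous_compose:
  fixes K :: "'b::topological_space \<Rightarrow> ennreal" and m :: "'a::topological_space \<Rightarrow> 'b"
  assumes "K \<in> borel_measurable borel" "continuous_on UNIV m"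
  shows "(\<lambda>x. K (m x)) \<in> borel_measurable borel"
  using measurable_compose[OF borel_measurable_continuous_onI[OF assms(2)] assms(1)] by (simp add: comp_def)

lemma lborel_pair_prod3: "((lborel \<Otimes>\<^sub>M lborel) \<Otimes>\<^sub>M lborel :: ((real \<times> real) \<times> real) measure) = lborel"
  by (simp add: lborel_prod)

lemma nn_integral_lborel_reorder3:
  fixes K :: "real \<Rightarrow> real \<Rightarrow> real \<Rightarrow> ennreal"
  assumes K: "(\<lambda>(v, \<theta>, \<phi>). K v \<theta> \<phi>) \<in> borel_measurable borel"
  shows "(\<integral>\<^sup>+v. (\<integral>\<^sup>+\<theta>. (\<integral>\<^sup>+\<phi>. K v \<theta> \<phi> \<partial>lborel) \<partial>lborel) \<partial>lborel)
       = (\<integral>\<^sup>+\<theta>. (\<integral>\<^sup>+\<phi>. (\<integral>\<^sup>+v. K v \<theta> \<phi> \<partial>lborel) \<partial>lborel) \<partial>lborel)"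
proof -
  have "(\<lambda>x. K (fst (fst x)) (snd (fst x)) (snd x)) \<in> borel_measurable borel"
    using borel_measurable_continuous_compose[OF K, of "\<lambda>x. (fst (fst x), snd (fst x), snd x)"]
    by (simp add: continuous_on_Pair continuous_on_fst continuous_on_snd continuous_on_id)
  then have "case_prod (\<lambda>x y. K (fst x) (snd x) y) \<in> borel_measurable ((lborel \<Otimes>\<^sub>M lborel) \<Otimes>\<^sub>M lborel)"
    unfolding lborel_pair_prod3 by (simp add: case_prod_beta')
  from lborel.borel_measurable_nn_integral[OF this]
  have "case_prod (\<lambda>v \<theta>. \<integral>\<^sup>+\<phi>. K v \<theta> \<phi> \<partial>lborel) \<in> borel_measurable (lborel \<Otimes>\<^sub>M lborel)"
    by (simp add: case_prod_beta')
  then have swap_outer: "(\<integral>\<^sup>+\<theta>. (\<integral>\<^sup>+v. (\<integral>\<^sup>+\<phi>. K v \<theta> \<phi> \<partial>lborel) \<partial>lborel) \<partial>lborel)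
      = (\<integral>\<^sup>+v. (\<integral>\<^sup>+\<theta>. (\<integral>\<^sup>+\<phi>. K v \<theta> \<phi> \<partial>lborel) \<partial>lborel) \<partial>lborel)"
    by (rule lborel_pair.Fubini')
  have swap_inner: "(\<integral>\<^sup>+v. (\<integral>\<^sup>+\<phi>. K v \<theta> \<phi> \<partial>lborel) \<partial>lborel) = (\<integral>\<^sup>+\<phi>. (\<integral>\<^sup>+v. K v \<theta> \<phi> \<partial>lborel) \<partial>lborel)"
    for \<theta>
  proof -
    have "(\<lambda>x. K (fst x) \<theta> (snd x)) \<in> borel_measurable borel"
      using borel_measurable_continuous_compose[OF K, of "\<lambda>x. (fst x, \<theta>, snd x)"]
      by (simp add: continuous_on_Pair continuous_on_fst continuous_on_snd continuous_on_id continuous_on_const)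
    then have "case_prod (\<lambda>v \<phi>. K v \<theta> \<phi>) \<in> borel_measurable (lborel \<Otimes>\<^sub>M lborel)"
      unfolding lborel_prod by (simp add: case_prod_beta')
    from lborel_pair.Fubini'[OF this] show ?thesis by simp
  qed
  show ?thesis unfolding swap_outer[symmetric] swap_inner ..
qed

lemma borel_measurable_nn_integral_first:
  fixes K :: "real \<Rightarrow> real \<Rightarrow> real \<Rightarrow> ennreal"
  assumes K: "(\<lambda>(v, \<theta>, \<phi>). K v \<theta> \<phi>) \<in> borel_measurable borel"
  shows "(\<lambda>z. \<integral>\<^sup>+v. K v (fst z) (snd z) \<partial>lborel) \<in> borel_measurable borel"
proof -
  have "(\<lambda>x. K (snd x) (fst (fst x)) (snd (fst x))) \<in> borel_measurable borel"
    using borel_measurable_continuous_compose[OF K, of "\<lambda>x. (snd x, fst (fst x), snd (fst x))"]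
    by (simp add: continuous_on_Pair continuous_on_fst continuous_on_snd continuous_on_id case_prod_beta)
  then have "case_prod (\<lambda>x v. K v (fst x) (snd x)) \<in> borel_measurable ((lborel \<Otimes>\<^sub>M lborel) \<Otimes>\<^sub>M lborel)"
    unfolding lborel_pair_prod3 by (simp add: case_prod_beta')
  from lborel.borel_measurable_nn_integral[OF this] show ?thesis unfolding lborel_prod by simp
qed

definition sph_density :: "real \<Rightarrow> real \<Rightarrow> ennreal" where
  "sph_density \<theta> \<phi> = ennreal (sin \<theta>) * indicator {0..2*pi} \<phi> * indicator {0..pi} \<theta>"

lemma sph_int_altdef: "sph_int f = (\<integral>\<^sup>+\<theta>. (\<integral>\<^sup>+\<phi>. f (sph \<theta> \<phi>) * sph_density \<theta> \<phi> \<partial>lborel) \<partial>lborel)"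
  unfolding sph_int_def
proof (rule nn_integral_cong)
  fix \<theta> :: real
  show "(\<integral>\<^sup>+\<phi>. f (sph \<theta> \<phi>) * ennreal (sin \<theta>) * indicator {0..2 * pi} \<phi> \<partial>lborel) * indicator {0..pi} \<theta>
      = (\<integral>\<^sup>+\<phi>. f (sph \<theta> \<phi>) * sph_density \<theta> \<phi> \<partial>lborel)"
    by (cases "\<theta> \<in> {0..pi}") (simp_all add: sph_density_def mult.assoc)
qed

lemma borel_measurable_sph_density: "(\<lambda>z. sph_density (fst z) (snd z)) \<in> borel_measurable borel"
proof -
  have "(\<lambda>z::real \<times> real. ennreal (sin (fst z))) \<in> borel_measurable borel"
    using measurable_compose[OF borel_measurable_continuous_onI measurable_ennreal, of "\<lambda>z::real \<times> real. sin (fst z)"]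
    by (simp add: comp_def continuous_on_sin continuous_on_fst continuous_on_id)
  moreover have "(\<lambda>z::real \<times> real. indicator {0..2*pi} (snd z) :: ennreal) \<in> borel_measurable borel"
    using measurable_compose[OF borel_measurable_continuous_onI borel_measurable_indicator, of snd "{0..2*pi}"]
    by (simp add: comp_def continuous_on_snd continuous_on_id)
  moreover have "(\<lambda>z::real \<times> real. indicator {0..pi} (fst z) :: ennreal) \<in> borel_measurable borel"
    using measurable_compose[OF borel_measurable_continuous_onI borel_measurable_indicator, of fst "{0..pi}"]
    by (simp add: comp_def continuous_on_fst continuous_on_id)
  ultimately show ?thesis unfolding sph_density_def by measurable
qed

definition sph_measurable :: "(real^3 \<Rightarrow> ennreal) \<Rightarrow> bool" where
  "sph_measurable f \<longleftrightarrow> (\<lambda>z. f (sph (fst z) (snd z))) \<in> borel_measurable borel"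

lemma sph_measurable_cmult: "sph_measurable f \<Longrightarrow> sph_measurable (\<lambda>\<omega>. c * f \<omega>)"
  unfolding sph_measurable_def by measurable

lemma sph_measurable_continuous:
  "continuous_on UNIV (\<lambda>z. g (sph (fst z) (snd z))) \<Longrightarrow> sph_measurable (\<lambda>\<omega>. ennreal (g \<omega>))"
  unfolding sph_measurable_def
  using measurable_compose[OF borel_measurable_continuous_onI measurable_ennreal] by (simp add: comp_def)

lemma sph_measurable_integrand:
  assumes "sph_measurable f"
  shows "(\<lambda>\<phi>. f (sph \<theta> \<phi>) * sph_density \<theta> \<phi>) \<in> borel_measurable lborel"
    and "(\<lambda>\<theta>. \<integral>\<^sup>+\<phi>. f (sph \<theta> \<phi>) * sph_density \<theta> \<phi> \<partial>lborel) \<in> borel_measurable lborel"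
proof -
  have m: "(\<lambda>z. f (sph (fst z) (snd z)) * sph_density (fst z) (snd z)) \<in> borel_measurable borel"
    using assms borel_measurable_sph_density unfolding sph_measurable_def by measurable
  then show "(\<lambda>\<phi>. f (sph \<theta> \<phi>) * sph_density \<theta> \<phi>) \<in> borel_measurable lborel"
    using measurable_compose[OF borel_measurable_continuous_onI m, of "\<lambda>\<phi>. (\<theta>, \<phi>)"]
    by (simp add: comp_def continuous_on_Pair continuous_on_const continuous_on_id)
  from m have "case_prod (\<lambda>\<theta> \<phi>. f (sph \<theta> \<phi>) * sph_density \<theta> \<phi>) \<in> borel_measurable (lborel \<Otimes>\<^sub>M lborel)"
    unfolding lborel_prod by (simp add: case_prod_beta')
  from lborel.borel_measurable_nn_integral[OF this]
  show "(\<lambda>\<theta>. \<integral>\<^sup>+\<phi>. f (sph \<theta> \<phi>) * sph_density \<theta> \<phi> \<partial>lborel) \<in> borel_measurable lborel"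
    by simp
qed

lemma sph_int_add:
  assumes "sph_measurable f" "sph_measurable g"
  shows "sph_int (\<lambda>\<omega>. f \<omega> + g \<omega>) = sph_int f + sph_int g"
  unfolding sph_int_altdef distrib_right
  by (subst nn_integral_add[symmetric]; intro nn_integral_cong nn_integral_add sph_measurable_integrand assms)

lemma sph_int_cmult:
  assumes "sph_measurable f"
  shows "sph_int (\<lambda>\<omega>. c * f \<omega>) = c * sph_int f"
  unfolding sph_int_altdef mult.assoc
  by (subst nn_integral_cmult[symmetric]; intro nn_integral_cong nn_integral_cmult sph_measurable_integrand assms)

lemma sph_int_mono:
  assumes "\<And>\<omega>. \<omega> \<in> sphere 0 1 \<Longrightarrow> f \<omega> \<le> g \<omega>"
  shows "sph_int f \<le> sph_int g"
  unfolding sph_int_altdef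
  by (intro nn_integral_mono mult_right_mono assms sph_sphere) simp

lemma nn_integral_sph_int_swap:
  fixes A :: "real \<Rightarrow> real^3 \<Rightarrow> ennreal"
  assumes A: "(\<lambda>(v, \<theta>, \<phi>). A v (sph \<theta> \<phi>) * indicator {a..} v) \<in> borel_measurable borel"
  shows "(\<integral>\<^sup>+v. sph_int (A v) * indicator {a..} v \<partial>lborel)
    = sph_int (\<lambda>\<omega>. \<integral>\<^sup>+v. A v \<omega> * indicator {a..} v \<partial>lborel)"
proof -
  define K where "K v \<theta> \<phi> = A v (sph \<theta> \<phi>) * indicator {a..} v * sph_density \<theta> \<phi>" for v \<theta> \<phi>
  have "(\<lambda>z. sph_density (fst (snd z)) (snd (snd z))) \<in> borel_measurable borel"
    using borel_measurable_continuous_compose[OF borel_measurable_sph_density, of snd]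
    by (simp add: continuous_on_snd continuous_on_id)
  with A have K: "(\<lambda>(v, \<theta>, \<phi>). K v \<theta> \<phi>) \<in> borel_measurable borel"
    unfolding K_def split_beta' by measurable
  have "(\<integral>\<^sup>+v. sph_int (A v) * indicator {a..} v \<partial>lborel)
      = (\<integral>\<^sup>+v. (\<integral>\<^sup>+\<theta>. (\<integral>\<^sup>+\<phi>. K v \<theta> \<phi> \<partial>lborel) \<partial>lborel) \<partial>lborel)"
    unfolding sph_int_altdef K_def
    by (intro nn_integral_cong) (simp add: indicator_def)
  also have "\<dots> = (\<integral>\<^sup>+\<theta>. (\<integral>\<^sup>+\<phi>. (\<integral>\<^sup>+v. K v \<theta> \<phi> \<partial>lborel) \<partial>lborel) \<partial>lborel)"
    by (rule nn_integral_lborel_reorder3[OF K])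
  also have "\<dots> = sph_int (\<lambda>\<omega>. \<integral>\<^sup>+v. A v \<omega> * indicator {a..} v \<partial>lborel)"
    unfolding sph_int_altdef
  proof (intro nn_integral_cong)
    fix \<theta> \<phi> :: real
    have "(\<lambda>v. A v (sph \<theta> \<phi>) * indicator {a..} v) \<in> borel_measurable borel"
      using borel_measurable_continuous_compose[OF A, of "\<lambda>v. (v, \<theta>, \<phi>)"]
      by (simp add: continuous_on_Pair continuous_on_id continuous_on_const)
    then show "(\<integral>\<^sup>+v. K v \<theta> \<phi> \<partial>lborel) = (\<integral>\<^sup>+v. A v (sph \<theta> \<phi>) * indicator {a..} v \<partial>lborel) * sph_density \<theta> \<phi>"
      unfolding K_def by (intro nn_integral_multc) simp
  qed
  finally show ?thesis .
qed

lemma S2_tensor_field_componentE: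
  assumes "S2_tensor_field k u0 v0 \<xi>" "is \<in> idx k"
  obtains S f where "region u0 v0 \<subseteq> S" "continuous_on S f"
    "\<And>u v \<omega>. (u, v, \<omega>) \<in> region u0 v0 \<Longrightarrow> f (u, v, \<omega>) = \<xi> u v \<omega> is"
    "\<And>d x. d \<in> Basis \<Longrightarrow> x \<in> S \<Longrightarrow> (\<lambda>t. f (x + t *\<^sub>R d)) differentiable (at 0)"
proof -
  from assms obtain S f where smooth: "smooth_on_open S f" and "region u0 v0 \<subseteq> S"
    and "\<forall>(u, v, \<omega>)\<in>region u0 v0. f (u, v, \<omega>) = \<xi> u v \<omega> is"
    unfolding S2_tensor_field_def by blast
  moreover have "continuous_on S (pderivs [] f)"
    "\<forall>d\<in>Basis. \<forall>x\<in>S. (\<lambda>t. pderivs [] f (x + t *\<^sub>R d)) differentiable (at 0)"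
    using smooth unfolding smooth_on_open_def by (metis empty_set empty_subsetI)+
  ultimately show ?thesis using that[of S f] by fastforce
qed

lemma S2_tensor_field_continuous_on:
  assumes "S2_tensor_field k u0 v0 \<xi>" "is \<in> idx k"
    and "continuous_on T U" "continuous_on T V" "continuous_on T W"
    and "\<And>z. z \<in> T \<Longrightarrow> (U z, V z, W z) \<in> region u0 v0"
  shows "continuous_on T (\<lambda>z. \<xi> (U z) (V z) (W z) is)"
proof -
  obtain S f where "region u0 v0 \<subseteq> S" "continuous_on S f"
    and f: "\<And>u v \<omega>. (u, v, \<omega>) \<in> region u0 v0 \<Longrightarrow> f (u, v, \<omega>) = \<xi> u v \<omega> is"
    using S2_tensor_field_componentE[OF assms(1,2)] by metis
  moreover have "continuous_on T (\<lambda>z. (U z, V z, W z))"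
    using assms(3-5) by (intro continuous_on_Pair)
  ultimately have "continuous_on T (\<lambda>z. f (U z, V z, W z))"
    using assms(6) by (elim continuous_on_compose2) auto
  then show ?thesis using f assms(6) by (simp cong: continuous_on_cong)
qed

lemma S2_tensor_field_differentiable:
  assumes "S2_tensor_field k u0 v0 \<xi>" "is \<in> idx k" and region: "(u, v, \<omega>) \<in> region u0 v0"
  shows "(\<lambda>v'. \<xi> u v' \<omega> is) differentiable (at v within {v0..})"
proof -
  obtain S f where "region u0 v0 \<subseteq> S"
    and f: "\<And>u v \<omega>. (u, v, \<omega>) \<in> region u0 v0 \<Longrightarrow> f (u, v, \<omega>) = \<xi> u v \<omega> is"
    and partial: "\<And>d x. d \<in> Basis \<Longrightarrow> x \<in> S \<Longrightarrow> (\<lambda>t. f (x + t *\<^sub>R d)) differentiable (at 0)"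
    using S2_tensor_field_componentE[OF assms(1,2)] by metis
  have "(0, 1, 0) \<in> (Basis :: (real \<times> real \<times> (real^3)) set)" by (simp add: Basis_prod_def)
  then have "(\<lambda>t. f ((u, v, \<omega>) + t *\<^sub>R (0, 1, 0))) differentiable (at 0)"
    using partial \<open>region u0 v0 \<subseteq> S\<close> region by blast
  then obtain D where "((\<lambda>t. f (u, t + v, \<omega>)) has_real_derivative D) (at 0)"
    using DERIV_deriv_iff_real_differentiable by (fastforce simp: add.commute)
  then have "((\<lambda>t. f (u, t, \<omega>)) has_real_derivative D) (at v)"
    using DERIV_shift[of "\<lambda>t. f (u, t, \<omega>)" D 0 v] by simp
  then have "((\<lambda>t. f (u, t, \<omega>)) has_real_derivative D) (at v within {v0..})"
    by (rule has_field_derivative_at_within)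
  moreover have "v \<in> {v0..}" using region unfolding region_def by simp
  moreover have "f (u, t, \<omega>) = \<xi> u t \<omega> is" if "t \<in> {v0..}" "dist t v < 1" for t
    using f region that unfolding region_def by simp
  ultimately have "((\<lambda>t. \<xi> u t \<omega> is) has_real_derivative D) (at v within {v0..})"
    by (rule has_field_derivative_transform_within[OF _ zero_less_one])
  then show ?thesis using real_differentiable_def by blast
qed

lemma pnorm2_nonneg: "pnorm2 M Q rs k \<xi> u v \<omega> \<ge> 0"
  unfolding pnorm2_def gnorm2_def
  by (intro divide_nonneg_nonneg sum_nonneg zero_le_power2) (simp add: power_mult zero_le_even_power)

context rn_double_null
begin

lemma rad_continuous_on_compose:
  "continuous_on T V \<Longrightarrow> continuous_on T (\<lambda>z. rad M Q rs u (V z))"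
  using continuous_on_compose2[OF rad_continuous_on] by blast

lemma pnorm2_continuous_on:
  assumes "S2_tensor_field k u0 v0 \<xi>" "continuous_on T V" "continuous_on T W"
    and "\<And>z. z \<in> T \<Longrightarrow> (u, V z, W z) \<in> region u0 v0"
  shows "continuous_on T (\<lambda>z. pnorm2 M Q rs k \<xi> u (V z) (W z))"
proof -
  have "continuous_on T (\<lambda>z. \<xi> u (V z) (W z) js)" if "js \<in> idx k" for js
    by (rule S2_tensor_field_continuous_on[OF assms(1) that continuous_on_const assms(2-4)])
  then have "continuous_on T (\<lambda>z. \<Sum>js\<in>idx k. (\<xi> u (V z) (W z) js)\<^sup>2)"
    by (intro continuous_on_sum continuous_on_power)
  moreover have "continuous_on T (\<lambda>z. rad M Q rs u (V z) ^ (2 * k))"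
    by (intro continuous_on_power rad_continuous_on_compose assms(2))
  ultimately show ?thesis
    unfolding pnorm2_def gnorm2_def by (rule continuous_on_divide) (simp add: rad_neq_0)
qed

lemma weighted_pnorm2_measurable:
  assumes Z: "S2_tensor_field k u0 v0 Z" and u: "u \<ge> u0" and w: "continuous_on UNIV w"
  shows "(\<lambda>(v, \<theta>, \<phi>). ennreal (w v * pnorm2 M Q rs k Z u v (sph \<theta> \<phi>)) * indicator {v0..} v)
    \<in> borel_measurable borel"
proof -
  let ?S = "{z :: real \<times> real \<times> real. v0 \<le> fst z}"
  have "continuous_on UNIV (\<lambda>z :: real \<times> real \<times> real. sph (fst (snd z)) (snd (snd z)))"
    using continuous_on_compose2[OF sph_continuous continuous_on_snd[OF continuous_on_id]] by simp
  then have "continuous_on ?S (\<lambda>z. sph (fst (snd z)) (snd (snd z)))"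
    by (rule continuous_on_subset) simp
  then have "continuous_on ?S (\<lambda>z. w (fst z) * pnorm2 M Q rs k Z u (fst z) (sph (fst (snd z)) (snd (snd z))))"
    using u sph_sphere
    by (intro continuous_on_mult continuous_on_compose2[OF w] continuous_on_fst continuous_on_id
        pnorm2_continuous_on[OF Z]) (auto simp: region_def)
  moreover have "closed ?S"
    by (intro closed_Collect_le continuous_on_const continuous_on_fst continuous_on_id)
  ultimately have "(\<lambda>z. ennreal (w (fst z) * pnorm2 M Q rs k Z u (fst z) (sph (fst (snd z)) (snd (snd z))))
      * indicator ?S z) \<in> borel_measurable borel"
    by (rule borel_measurable_ennreal_indicator)
  moreover have "indicator ?S z = (indicator {v0..} (fst z) :: ennreal)" for z
    by (simp add: indicator_def)
  ultimately show ?thesis by (simp add: split_beta')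
qed

lemma weighted_pnorm2_nn_integral_sph_int:
  assumes Z: "S2_tensor_field k u0 v0 Z" and u: "u \<ge> u0" and w: "continuous_on UNIV w"
  shows "(\<integral>\<^sup>+v. sph_int (\<lambda>\<omega>. ennreal (w v * pnorm2 M Q rs k Z u v \<omega>)) * indicator {v0..} v \<partial>lborel)
      = sph_int (\<lambda>\<omega>. \<integral>\<^sup>+v. ennreal (w v * pnorm2 M Q rs k Z u v \<omega>) * indicator {v0..} v \<partial>lborel)"
    and "sph_measurable (\<lambda>\<omega>. \<integral>\<^sup>+v. ennreal (w v * pnorm2 M Q rs k Z u v \<omega>) * indicator {v0..} v \<partial>lborel)"
  using nn_integral_sph_int_swap borel_measurable_nn_integral_first weighted_pnorm2_measurable[OF assms]
  unfolding sph_measurable_def by auto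

context
  fixes k u0 v0 \<xi> \<Xi>
  assumes \<xi>: "S2_tensor_field k u0 v0 \<xi>" and \<Xi>: "S2_tensor_field k u0 v0 \<Xi>"
    and transport: "\<forall>(u, v, \<omega>)\<in>region u0 v0. \<forall>is\<in>idx k.
      Om_nabla4 M Q rs k v0 \<xi> u v \<omega> is = Om2uv M Q rs u v * \<Xi> u v \<omega> is"
begin

lemma transport_has_derivative:
  assumes region: "(u, v, \<omega>) \<in> region u0 v0" and "is": "is \<in> idx k"
  shows "((\<lambda>v. \<xi> u v \<omega> is) has_real_derivative
      real k * Om2uv M Q rs u v / rad M Q rs u v * \<xi> u v \<omega> is + Om2uv M Q rs u v * \<Xi> u v \<omega> is)
      (at v within {v0..})"
proof -
  let ?D = "vector_derivative (\<lambda>v'. \<xi> u v' \<omega> is) (at v within {v0..})"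
  have "((\<lambda>v'. \<xi> u v' \<omega> is) has_real_derivative ?D) (at v within {v0..})"
    using S2_tensor_field_differentiable[OF \<xi> "is" region] vector_derivative_works
      has_real_derivative_iff_has_vector_derivative by blast
  moreover have "Om_nabla4 M Q rs k v0 \<xi> u v \<omega> is = Om2uv M Q rs u v * \<Xi> u v \<omega> is"
    using transport region "is" by fast
  then have "?D = real k * Om2uv M Q rs u v / rad M Q rs u v * \<xi> u v \<omega> is + Om2uv M Q rs u v * \<Xi> u v \<omega> is"
    unfolding Om_nabla4_def by (simp add: algebra_simps)
  ultimately show ?thesis by simp
qed

lemma outgoing_cone_energy_transport:
  assumes u: "u \<ge> u0" and \<omega>: "\<omega> \<in> sphere 0 1"
  shows "outgoing_cone_energy (\<lambda>v. rad M Q rs u v) (\<lambda>v. Om2uv M Q rs u v)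
    (\<lambda>v. pnorm2 M Q rs k \<xi> u v \<omega>) (\<lambda>v. pnorm2 M Q rs k \<Xi> u v \<omega>)
    (\<lambda>v. (\<Sum>is\<in>idx k. \<xi> u v \<omega> is * \<Xi> u v \<omega> is) / rad M Q rs u v ^ (2 * k)) (rplus M Q) v0"
proof unfold_locales
  fix v assume "v \<ge> v0"
  then have "(u, v, \<omega>) \<in> region u0 v0" using u \<omega> by (simp add: region_def)
  then show "((\<lambda>v. pnorm2 M Q rs k \<xi> u v \<omega>) has_real_derivative
      2 * Om2uv M Q rs u v * ((\<Sum>is\<in>idx k. \<xi> u v \<omega> is * \<Xi> u v \<omega> is) / rad M Q rs u v ^ (2 * k)))
      (at v within {v0..})"
    unfolding pnorm2_def gnorm2_def
    by (intro rescaled_sum_squares_has_derivative has_field_derivative_at_within[OF rad_has_derivative]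
        rad_neq_0 transport_has_derivative)
next
  show "continuous_on {v0..} (\<lambda>v. pnorm2 M Q rs k \<Xi> u v \<omega>)"
    using u \<omega> by (intro pnorm2_continuous_on[OF \<Xi>] continuous_intros) (auto simp: region_def)
next
  fix \<epsilon> v :: real assume "\<epsilon> > 0"
  then show "2 * ((\<Sum>is\<in>idx k. \<xi> u v \<omega> is * \<Xi> u v \<omega> is) / rad M Q rs u v ^ (2 * k))
      \<le> \<epsilon> * pnorm2 M Q rs k \<xi> u v \<omega> + pnorm2 M Q rs k \<Xi> u v \<omega> / \<epsilon>"
    unfolding pnorm2_def gnorm2_def by (intro weighted_sum_cross_le) (simp_all add: rad_pos)
qed (use rplus_pos rad_gt_rplus rad_has_derivative Om2uv_pos Om2uv_continuous_on pnorm2_nonneg in auto)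

lemma transport_sph_int_combination:
  assumes u: "u \<ge> u0"
  shows "sph_int (\<lambda>\<omega>. ennreal a * ennreal (pnorm2 M Q rs k \<xi> u v0 \<omega>) + ennreal b *
      (\<integral>\<^sup>+v. ennreal (Om2uv M Q rs u v * (rad M Q rs u v)\<^sup>2 * pnorm2 M Q rs k \<Xi> u v \<omega>)
        * indicator {v0..} v \<partial>lborel))
    = ennreal a * L2sq M Q rs k \<xi> u v0 + ennreal b * flux M Q rs k \<Xi> u v0"
proof -
  have w: "continuous_on UNIV (\<lambda>v. Om2uv M Q rs u v * (rad M Q rs u v)\<^sup>2)"
    by (intro continuous_intros Om2uv_continuous_on rad_continuous_on)
  have "sph_measurable (\<lambda>\<omega>. ennreal (pnorm2 M Q rs k \<xi> u v0 \<omega>))"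
    using u sph_sphere
    by (intro sph_measurable_continuous pnorm2_continuous_on[OF \<xi>] continuous_on_const sph_continuous)
       (auto simp: region_def)
  then show ?thesis
    unfolding L2sq_def flux_def weighted_pnorm2_nn_integral_sph_int(1)[OF \<Xi> u w]
    using weighted_pnorm2_nn_integral_sph_int(2)[OF \<Xi> u w]
    by (simp add: sph_int_add sph_int_cmult sph_measurable_cmult)
qed

lemma transport_energy_estimate:
  assumes u: "u \<ge> u0"
  shows "Limsup at_top (\<lambda>v. L2sq M Q rs k \<xi> u v)
    \<le> ennreal (1 / (1 - rplus M Q / rad M Q rs u v0)) * L2sq M Q rs k \<xi> u v0
      + ennreal (1 / rplus M Q) * flux M Q rs k \<Xi> u v0"
proof (rule Limsup_bounded)
  have weight: "rad M Q rs u v0 / (rad M Q rs u v0 - rplus M Q) = 1 / (1 - rplus M Q / rad M Q rs u v0)"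
    using rad_gt_rplus[of u v0] rplus_pos by (simp add: field_simps)
  have bound: "L2sq M Q rs k \<xi> u v
      \<le> ennreal (1 / (1 - rplus M Q / rad M Q rs u v0)) * L2sq M Q rs k \<xi> u v0
        + ennreal (1 / rplus M Q) * flux M Q rs k \<Xi> u v0" if "v \<ge> v0" for v
  proof -
    have "L2sq M Q rs k \<xi> u v
        \<le> sph_int (\<lambda>\<omega>. ennreal (1 / (1 - rplus M Q / rad M Q rs u v0)) * ennreal (pnorm2 M Q rs k \<xi> u v0 \<omega>)
          + ennreal (1 / rplus M Q) * (\<integral>\<^sup>+t. ennreal (Om2uv M Q rs u t * (rad M Q rs u t)\<^sup>2
            * pnorm2 M Q rs k \<Xi> u t \<omega>) * indicator {v0..} t \<partial>lborel))"
      unfolding L2sq_def weight[symmetric]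
      by (rule sph_int_mono, rule outgoing_cone_energy.energy_bound_nn_integral
          [OF outgoing_cone_energy_transport[OF u] that])
    also have "\<dots> = ennreal (1 / (1 - rplus M Q / rad M Q rs u v0)) * L2sq M Q rs k \<xi> u v0
        + ennreal (1 / rplus M Q) * flux M Q rs k \<Xi> u v0"
      by (rule transport_sph_int_combination[OF u])
    finally show ?thesis .
  qed
  show "\<forall>\<^sub>F v in at_top. L2sq M Q rs k \<xi> u v
      \<le> ennreal (1 / (1 - rplus M Q / rad M Q rs u v0)) * L2sq M Q rs k \<xi> u v0
        + ennreal (1 / rplus M Q) * flux M Q rs k \<Xi> u v0"
    by (rule eventually_mono[OF eventually_ge_at_top[of v0] bound])
qed

lemma transport_bulk_estimate:
  assumes u: "u \<ge> u0"
  shows "bulk M Q rs k \<xi> u v0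
    \<le> ennreal (16 / rplus M Q) * (L2sq M Q rs k \<xi> u v0 + ennreal (1 / rplus M Q) * flux M Q rs k \<Xi> u v0)"
proof -
  let ?rp = "rplus M Q"
  have w: "continuous_on UNIV (\<lambda>v. Om2uv M Q rs u v / (rad M Q rs u v)\<^sup>2)"
    by (intro continuous_intros Om2uv_continuous_on rad_continuous_on) (simp add: rad_neq_0)
  have "bulk M Q rs k \<xi> u v0 = sph_int (\<lambda>\<omega>. \<integral>\<^sup>+v. ennreal (Om2uv M Q rs u v / (rad M Q rs u v)\<^sup>2
      * pnorm2 M Q rs k \<xi> u v \<omega>) * indicator {v0..} v \<partial>lborel)"
    unfolding bulk_def by (rule weighted_pnorm2_nn_integral_sph_int(1)[OF \<xi> u w])
  also have "\<dots> \<le> sph_int (\<lambda>\<omega>. ennreal (4 / ?rp) * ennreal (pnorm2 M Q rs k \<xi> u v0 \<omega>)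
      + ennreal (16 / ?rp\<^sup>2) * (\<integral>\<^sup>+t. ennreal (Om2uv M Q rs u t * (rad M Q rs u t)\<^sup>2
        * pnorm2 M Q rs k \<Xi> u t \<omega>) * indicator {v0..} t \<partial>lborel))"
    by (rule sph_int_mono, rule outgoing_cone_energy.bulk_bound_nn_integral
        [OF outgoing_cone_energy_transport[OF u]])
  also have "\<dots> = ennreal (4 / ?rp) * L2sq M Q rs k \<xi> u v0 + ennreal (16 / ?rp\<^sup>2) * flux M Q rs k \<Xi> u v0"
    by (rule transport_sph_int_combination[OF u])
  also have "\<dots> \<le> ennreal (16 / ?rp) * L2sq M Q rs k \<xi> u v0
      + ennreal (16 / ?rp) * (ennreal (1 / ?rp) * flux M Q rs k \<Xi> u v0)"
  proof (intro add_mono mult_right_mono)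
    show "ennreal (4 / ?rp) \<le> ennreal (16 / ?rp)"
      using rplus_pos by (intro ennreal_leI) (simp add: divide_right_mono)
    have "ennreal (16 / ?rp\<^sup>2) = ennreal (16 / ?rp) * ennreal (1 / ?rp)"
      using rplus_pos by (simp add: ennreal_mult[symmetric] power2_eq_square)
    then show "ennreal (16 / ?rp\<^sup>2) * flux M Q rs k \<Xi> u v0
        \<le> ennreal (16 / ?rp) * (ennreal (1 / ?rp) * flux M Q rs k \<Xi> u v0)"
      by (simp add: mult.assoc)
  qed simp
  also have "\<dots> = ennreal (16 / ?rp) * (L2sq M Q rs k \<xi> u v0 + ennreal (1 / ?rp) * flux M Q rs k \<Xi> u v0)"
    by (simp add: distrib_left)
  finally show ?thesis .
qed

end

end

theorem lemma2p2:
  fixes M Q :: real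
  assumes "M > 0" and "\<bar>Q\<bar> \<le> M"
  shows "\<exists>C::real. \<forall>rs u0 v0 (k::nat) \<xi> \<Xi>.
    is_tortoise M Q rs \<and>
    S2_tensor_field k u0 v0 \<xi> \<and> S2_tensor_field k u0 v0 \<Xi> \<and>
    (\<forall>(u, v, \<omega>)\<in>region u0 v0. \<forall>is\<in>idx k.
        Om_nabla4 M Q rs k v0 \<xi> u v \<omega> is = Om2uv M Q rs u v * \<Xi> u v \<omega> is) \<and>
    (\<bar>Q\<bar> < M \<longrightarrow> (\<exists>K. \<forall>\<^sub>F u in at_top. \<forall>\<omega>\<in>sphere 0 1.
        sqrt (pnorm2 M Q rs k \<xi> u v0 \<omega>) \<le> K * sqrt (Om2uv M Q rs u v0)))
    \<longrightarrow> (\<forall>u\<ge>u0.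
      Limsup at_top (\<lambda>v. L2sq M Q rs k \<xi> u v)
        \<le> ennreal (1 / (1 - rplus M Q / rad M Q rs u v0)) * L2sq M Q rs k \<xi> u v0
          + ennreal (1 / rplus M Q) * flux M Q rs k \<Xi> u v0
      \<and> bulk M Q rs k \<xi> u v0
        \<le> ennreal C * (L2sq M Q rs k \<xi> u v0 + ennreal (1 / rplus M Q) * flux M Q rs k \<Xi> u v0))"
proof (intro exI[of _ "16 / rplus M Q"] allI impI, goal_cases)
  case (1 rs u0 v0 k \<xi> \<Xi> u)
  then interpret rn_double_null M Q rs
    using assms by unfold_locales blast+
  from 1 show ?case
    using transport_energy_estimate transport_bulk_estimate by blast
qed

end
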